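(* Let $m\ge1$, $\tau_1\ge\tau_2\ge\dots\ge\tau_m>0$, $b_1,\dots,b_m>0$, and $\psi(u)=\frac12u^2+\sum_{j=1}^mb_j\sqrt{\tau_j-u^2}$. Let $\omega$ be a differentiable function on $(0,\infty)$ with $|\omega^{(j)}(u)|\le a_0u^{-j}$ for $j=0,1$ and all $u>0$. Let $\chi$ be a smooth non-decreasing function on $\mathbb{R}$ with $\chi(\lambda)=0$ for $\lambda\le\frac14$ and $\chi(\lambda)=1$ for $\lambda\ge\frac12$. Then there is a constant $C_0$ depending only on $a_0$ (and $\chi$) such that for every $1\le k\le m$, \[ \Bigl|\int_0^\infty e^{i\psi(u)}\Bigl(1-\chi\Bigl(\frac{u}{\sqrt{\tau_m}}\Bigr)\Bigr)\omega(u)\frac{u}{\sqrt{\tau_k}}\,du\Bigr|\le C_0\min\Bigl(\tau_1^{1/4},\ m^{3/2}b_k^{-1}\max_\ell b_\ell\Bigr). \]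
   Context: The integrand vanishes for $u\ge\frac12\sqrt{\tau_m}$, so only the values of $\psi$ on $[0,\frac12\sqrt{\tau_m}]$ matter. *)

theory Defs
  imports "HOL-Analysis.Analysis"
begin

definition smooth_fun :: "(real \<Rightarrow> real) \<Rightarrow> bool" where
  "smooth_fun f \<longleftrightarrow> (\<forall>n x. ((deriv ^^ n) f) differentiable (at x))"

definition psi :: "nat \<Rightarrow> (nat \<Rightarrow> real) \<Rightarrow> (nat \<Rightarrow> real) \<Rightarrow> real \<Rightarrow> real" where
  "psi m \<tau> b u = u\<^sup>2 / 2 + (\<Sum>j=1..m. b j * sqrt (\<tau> j - u\<^sup>2))"

end

theory Submission
  imports Defs
begin

text \<open>
  On the support \<open>0 < u < R = sqrt \<tau>\<^sub>m / 2\<close> of the amplitude the phase satisfies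
  \<open>\<psi>' u = u g u\<close> with \<open>g u = 1 - \<Sum>\<^sub>j b\<^sub>j / sqrt (\<tau>\<^sub>j - u\<^sup>2)\<close>, and \<open>g u + \<mu> u\<^sup>2 / 2\<close> is
  nonincreasing for \<open>\<mu> = \<Sum>\<^sub>j b\<^sub>j \<tau>\<^sub>j^(-3/2)\<close>. So \<open>g\<close> changes sign at most once, at some \<open>z\<close>,
  and \<open>\<bar>g u\<bar> \<ge> \<mu> \<bar>u\<^sup>2 - z\<^sup>2\<bar> / 2\<close>. Where \<open>\<bar>g\<bar>\<close> is bounded below, one integration by parts
  gains the factor \<open>1 / \<bar>g\<bar>\<close>: the cutoff only costs its total variation, and
  \<open>\<bar>\<omega>'\<bar> \<le> a\<^sub>0 / u\<close> stays integrable against \<open>1 / (u \<bar>g\<bar>)\<close>. Within distance \<open>d\<close> of \<open>z\<^sup>2\<close>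
  in the variable \<open>u\<^sup>2\<close> the trivial bound is used; altogether the integral is
  \<open>O(a\<^sub>0 \<tau>\<^sub>k^(-1/2) (d + 1 / (\<mu> d)))\<close>.

  With \<open>\<beta>\<^sub>j = b\<^sub>j / sqrt \<tau>\<^sub>j\<close>: if \<open>\<Sum>\<^sub>j \<beta>\<^sub>j < 1/4\<close> or \<open>\<beta>\<^sub>k \<ge> 4\<close>, then \<open>\<bar>g\<bar> \<ge> 1/2\<close>
  everywhere and integration by parts alone gives \<open>O(a\<^sub>0)\<close>. Otherwise
  \<open>\<mu> \<ge> \<Sum>\<^sub>j \<beta>\<^sub>j / \<tau>\<^sub>1 \<ge> 1 / (4 \<tau>\<^sub>1)\<close>, and \<open>\<mu> \<ge> \<beta>\<^sub>j / \<tau>\<^sub>j \<ge> 1 / (4 m \<tau>\<^sub>j)\<close> for some \<open>j\<close>;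
  the choices \<open>d = sqrt \<tau>\<^sub>1\<close> and \<open>d = sqrt (m \<tau>\<^sub>j)\<close> give the two bounds. Small \<open>\<tau>\<^sub>m\<close> is
  handled by the trivial bound \<open>a\<^sub>0 sqrt \<tau>\<^sub>m / 8\<close>.
\<close>

section \<open>Integration by parts against an oscillating factor\<close>

lemma has_vector_derivative_exp_i_phase:
  fixes \<phi> :: "real \<Rightarrow> real"
  assumes "(\<phi> has_real_derivative d) (at u)"
  shows "((\<lambda>u. exp (\<i> * complex_of_real (\<phi> u))) has_vector_derivative
           (\<i> * complex_of_real d) * exp (\<i> * complex_of_real (\<phi> u))) (at u)"
proof -
  have "((\<lambda>u. \<i> * complex_of_real (\<phi> u)) has_vector_derivative \<i> * complex_of_real d) (at u)"
    by (intro has_vector_derivative_mult_right has_vector_derivative_of_real assms)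
  from field_vector_diff_chain_at[OF this DERIV_exp] show ?thesis
    by (simp add: o_def)
qed

lemma integral_exp_i_phase_by_parts:
  fixes \<phi> g g' c c' :: "real \<Rightarrow> real"
  assumes "a \<le> b"
    and d\<phi>: "\<And>u. u \<in> {a..b} \<Longrightarrow> (\<phi> has_real_derivative u * g u) (at u)"
    and dg: "\<And>u. u \<in> {a..b} \<Longrightarrow> (g has_real_derivative g' u) (at u)"
    and dc: "\<And>u. u \<in> {a..b} \<Longrightarrow> (c has_real_derivative c' u) (at u)"
    and g_nz: "\<And>u. u \<in> {a..b} \<Longrightarrow> g u \<noteq> 0"
  defines "D \<equiv> \<lambda>u. (c' u * g u - c u * g' u) / (g u * g u)"
  shows "(\<lambda>u. exp (\<i> * complex_of_real (\<phi> u)) * complex_of_real (D u)) integrable_on {a..b}"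
    and "integral {a..b} (\<lambda>u. exp (\<i> * complex_of_real (\<phi> u)) * complex_of_real (u * c u))
      = \<i> * (exp (\<i> * complex_of_real (\<phi> a)) * complex_of_real (c a / g a)
             - exp (\<i> * complex_of_real (\<phi> b)) * complex_of_real (c b / g b))
        + \<i> * integral {a..b} (\<lambda>u. exp (\<i> * complex_of_real (\<phi> u)) * complex_of_real (D u))"
proof -
  define ex where "ex u = exp (\<i> * complex_of_real (\<phi> u))" for u
  define h where "h u = ex u * complex_of_real (u * c u)" for u
  define err where "err u = ex u * complex_of_real (D u)" for u
  define E where "E u = - \<i> * (ex u * complex_of_real (c u / g u))" for u
  have dE: "(E has_vector_derivative (h u - \<i> * err u)) (at u within {a..b})" if u: "u \<in> {a..b}" for u
  proof -
    have cg: "((\<lambda>u. c u / g u) has_real_derivative D u) (at u)"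
      unfolding D_def by (rule DERIV_divide[OF dc[OF u] dg[OF u] g_nz[OF u]])
    have ex: "(ex has_vector_derivative (\<i> * complex_of_real (u * g u)) * ex u) (at u)"
      unfolding ex_def by (rule has_vector_derivative_exp_i_phase[OF d\<phi>[OF u]])
    have "(E has_vector_derivative - \<i> * (ex u * complex_of_real (D u)
        + (\<i> * complex_of_real (u * g u)) * ex u * complex_of_real (c u / g u))) (at u)"
      unfolding E_def
      by (intro has_vector_derivative_mult_right has_vector_derivative_mult ex
          has_vector_derivative_of_real cg)
    moreover have "- \<i> * (ex u * complex_of_real (D u)
        + (\<i> * complex_of_real (u * g u)) * ex u * complex_of_real (c u / g u)) = h u - \<i> * err u"
      using g_nz[OF u] unfolding h_def err_def by (simp add: field_simps)
    ultimately show ?thesis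
      using has_vector_derivative_at_within by metis
  qed
  have h_int: "h integrable_on {a..b}"
  proof (intro integrable_continuous_interval continuous_at_imp_continuous_on ballI)
    fix u assume u: "u \<in> {a..b}"
    show "isCont h u"
      unfolding h_def ex_def
      using DERIV_isCont[OF d\<phi>[OF u]] DERIV_isCont[OF dc[OF u]] by (intro continuous_intros) auto
  qed
  have I_E: "((\<lambda>u. h u - \<i> * err u) has_integral (E b - E a)) {a..b}"
    by (rule fundamental_theorem_of_calculus[OF \<open>a \<le> b\<close> dE])
  have "(\<lambda>u. \<i> * err u) integrable_on {a..b}"
    using integrable_diff[OF h_int has_integral_integrable[OF I_E]] by simp
  then show err_int: "(\<lambda>u. ex u * complex_of_real (D u)) integrable_on {a..b}"
    unfolding err_def by simp
  have "integral {a..b} h = (E b - E a) + integral {a..b} (\<lambda>u. \<i> * err u)"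
    using integral_diff[OF h_int has_integral_integrable[OF I_E]] I_E by (simp add: integral_unique)
  then show "integral {a..b} (\<lambda>u. ex u * complex_of_real (u * c u))
      = \<i> * (ex a * complex_of_real (c a / g a) - ex b * complex_of_real (c b / g b))
        + \<i> * integral {a..b} (\<lambda>u. ex u * complex_of_real (D u))"
    unfolding h_def E_def err_def by (simp add: algebra_simps)
qed

lemma norm_integral_le_antiderivative:
  fixes h :: "real \<Rightarrow> 'a::banach" and Q Q' :: "real \<Rightarrow> real"
  assumes "a \<le> b" and "h integrable_on {a..b}"
    and dQ: "\<And>u. u \<in> {a..b} \<Longrightarrow> (Q has_real_derivative Q' u) (at u)"
    and h_le: "\<And>u. u \<in> {a..b} \<Longrightarrow> norm (h u) \<le> Q' u"
  shows "norm (integral {a..b} h) \<le> Q b - Q a"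
proof -
  have "(Q has_vector_derivative Q' u) (at u within {a..b})" if "u \<in> {a..b}" for u
    using dQ[OF that] by (simp add: has_real_derivative_iff_has_vector_derivative[symmetric] has_field_derivative_at_within)
  then have I_Q: "(Q' has_integral (Q b - Q a)) {a..b}"
    by (rule fundamental_theorem_of_calculus[OF \<open>a \<le> b\<close>])
  have "norm (integral {a..b} h) \<le> integral {a..b} Q'"
    by (rule integral_norm_bound_integral[OF assms(2) has_integral_integrable[OF I_Q] h_le])
  then show ?thesis
    using integral_unique[OF I_Q] by simp
qed

lemma abs_quotient_derivative_le:
  fixes c c' g g' M :: real
  assumes "g \<noteq> 0" "g' \<le> 0" "\<bar>c\<bar> \<le> M"
  shows "\<bar>(c' * g - c * g') / (g * g)\<bar> \<le> \<bar>c'\<bar> / \<bar>g\<bar> - M * g' / (g * g)"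
proof -
  have gg: "g * g > 0"
    using assms(1) not_real_square_gt_zero by blast
  have "\<bar>c * g'\<bar> \<le> M * (- g')"
    using assms(2,3) by (simp add: abs_mult mult_right_mono_neg)
  then have "\<bar>c' * g - c * g'\<bar> \<le> \<bar>c'\<bar> * \<bar>g\<bar> + M * (- g')"
    using abs_triangle_ineq4[of "c' * g" "c * g'"] by (simp add: abs_mult)
  then have "\<bar>(c' * g - c * g') / (g * g)\<bar> \<le> (\<bar>c'\<bar> * \<bar>g\<bar> + M * (- g')) / (g * g)"
    using gg by (simp add: abs_div divide_right_mono)
  also have "\<dots> = \<bar>c'\<bar> / \<bar>g\<bar> - M * g' / (g * g)"
    using assms(1) by (simp add: field_simps)
  finally show ?thesis .
qed

text \<open>The majorant of \<open>\<bar>c'\<bar> / \<bar>g\<bar>\<close> is given through its antiderivative \<open>P\<close>, which avoids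
  any integrability assumption on \<open>c'\<close>.\<close>
lemma oscillatory_integral_ibp_bound:
  fixes \<phi> g g' c c' P p :: "real \<Rightarrow> real" and a b L M :: real
  assumes "a \<le> b" and "L > 0"
    and d\<phi>: "\<And>u. u \<in> {a..b} \<Longrightarrow> (\<phi> has_real_derivative u * g u) (at u)"
    and dg: "\<And>u. u \<in> {a..b} \<Longrightarrow> (g has_real_derivative g' u) (at u)"
    and dc: "\<And>u. u \<in> {a..b} \<Longrightarrow> (c has_real_derivative c' u) (at u)"
    and dP: "\<And>u. u \<in> {a..b} \<Longrightarrow> (P has_real_derivative p u) (at u)"
    and g_ge: "\<And>u. u \<in> {a..b} \<Longrightarrow> L \<le> \<bar>g u\<bar>"
    and g'_nonpos: "\<And>u. u \<in> {a..b} \<Longrightarrow> g' u \<le> 0"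
    and c_le: "\<And>u. u \<in> {a..b} \<Longrightarrow> \<bar>c u\<bar> \<le> M"
    and c'_le: "\<And>u. u \<in> {a..b} \<Longrightarrow> \<bar>c' u\<bar> / \<bar>g u\<bar> \<le> p u"
  shows "norm (integral {a..b} (\<lambda>u. exp (\<i> * complex_of_real (\<phi> u)) * complex_of_real (u * c u)))
     \<le> 4 * M / L + (P b - P a)"
proof -
  define ex where "ex u = exp (\<i> * complex_of_real (\<phi> u))" for u
  define D where "D u = (c' u * g u - c u * g' u) / (g u * g u)" for u
  have g_nz: "g u \<noteq> 0" if "u \<in> {a..b}" for u
    using g_ge[OF that] \<open>L > 0\<close> by auto
  have M_nonneg: "0 \<le> M"
    using c_le[of a] \<open>a \<le> b\<close> by auto
  have inv_g: "\<bar>1 / g u\<bar> \<le> 1 / L" if "u \<in> {a..b}" for u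
    using g_ge[OF that] \<open>L > 0\<close> by (simp add: abs_div frac_le)
  have D_int: "(\<lambda>u. ex u * complex_of_real (D u)) integrable_on {a..b}"
    unfolding ex_def D_def by (rule integral_exp_i_phase_by_parts(1)[OF \<open>a \<le> b\<close> d\<phi> dg dc g_nz])
  have by_parts: "integral {a..b} (\<lambda>u. ex u * complex_of_real (u * c u))
      = \<i> * (ex a * complex_of_real (c a / g a) - ex b * complex_of_real (c b / g b))
        + \<i> * integral {a..b} (\<lambda>u. ex u * complex_of_real (D u))"
    unfolding ex_def D_def by (rule integral_exp_i_phase_by_parts(2)[OF \<open>a \<le> b\<close> d\<phi> dg dc g_nz])
  have boundary: "norm (ex u * complex_of_real (c u / g u)) \<le> M / L" if u: "u \<in> {a..b}" for u
  proof -
    have "norm (ex u * complex_of_real (c u / g u)) = \<bar>c u\<bar> / \<bar>g u\<bar>"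
      unfolding ex_def by (simp add: norm_mult norm_divide)
    also have "\<dots> \<le> M / L"
      using c_le[OF u] g_ge[OF u] \<open>L > 0\<close> M_nonneg by (intro frac_le) auto
    finally show ?thesis .
  qed
  have "norm (integral {a..b} (\<lambda>u. ex u * complex_of_real (D u))) \<le> (P b + M / g b) - (P a + M / g a)"
  proof (rule norm_integral_le_antiderivative[OF \<open>a \<le> b\<close> D_int])
    fix u assume u: "u \<in> {a..b}"
    show "((\<lambda>u. P u + M / g u) has_real_derivative p u - M * g' u / (g u * g u)) (at u)"
      using dP[OF u] dg[OF u] g_nz[OF u] by (auto intro!: derivative_eq_intros simp: field_simps power2_eq_square)
    have "norm (ex u * complex_of_real (D u)) = \<bar>D u\<bar>"
      unfolding ex_def by (simp add: norm_mult)
    also have "\<dots> \<le> \<bar>c' u\<bar> / \<bar>g u\<bar> - M * g' u / (g u * g u)"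
      unfolding D_def by (rule abs_quotient_derivative_le[OF g_nz[OF u] g'_nonpos[OF u] c_le[OF u]])
    also have "\<dots> \<le> p u - M * g' u / (g u * g u)"
      using c'_le[OF u] by simp
    finally show "norm (ex u * complex_of_real (D u)) \<le> p u - M * g' u / (g u * g u)" .
  qed
  moreover have "M * (1 / g b - 1 / g a) \<le> M * (2 / L)"
    using inv_g[of a] inv_g[of b] \<open>a \<le> b\<close> M_nonneg unfolding abs_le_iff by (intro mult_left_mono) auto
  moreover have "norm (integral {a..b} (\<lambda>u. ex u * complex_of_real (u * c u)))
      \<le> norm (ex a * complex_of_real (c a / g a)) + norm (ex b * complex_of_real (c b / g b))
        + norm (integral {a..b} (\<lambda>u. ex u * complex_of_real (D u)))"
    unfolding by_parts
    using norm_triangle_ineq[of "\<i> * (ex a * complex_of_real (c a / g a) - ex b * complex_of_real (c b / g b))"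
        "\<i> * integral {a..b} (\<lambda>u. ex u * complex_of_real (D u))"]
      norm_triangle_ineq4[of "ex a * complex_of_real (c a / g a)" "ex b * complex_of_real (c b / g b)"]
    by (simp add: norm_mult)
  moreover have "norm (ex a * complex_of_real (c a / g a)) \<le> M / L"
    "norm (ex b * complex_of_real (c b / g b)) \<le> M / L"
    using boundary \<open>a \<le> b\<close> by auto
  moreover have "M * (1 / g b - 1 / g a) = M / g b - M / g a" "4 * M / L = M / L + M / L + M * (2 / L)"
    by (simp_all add: right_diff_distrib)
  ultimately have "norm (integral {a..b} (\<lambda>u. ex u * complex_of_real (u * c u))) \<le> 4 * M / L + (P b - P a)"
    by linarith
  then show ?thesis
    unfolding ex_def .
qed

section \<open>The phase\<close>

definition psi_slope :: "nat \<Rightarrow> (nat \<Rightarrow> real) \<Rightarrow> (nat \<Rightarrow> real) \<Rightarrow> real \<Rightarrow> real" where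
  "psi_slope m \<tau> b u = 1 - (\<Sum>j=1..m. b j / sqrt (\<tau> j - u\<^sup>2))"

definition psi_curvature :: "nat \<Rightarrow> (nat \<Rightarrow> real) \<Rightarrow> (nat \<Rightarrow> real) \<Rightarrow> real" where
  "psi_curvature m \<tau> b = (\<Sum>j=1..m. b j / sqrt (\<tau> j) ^ 3)"

lemma psi_has_real_derivative:
  assumes "\<And>j. j \<in> {1..m} \<Longrightarrow> u\<^sup>2 < \<tau> j"
  shows "(psi m \<tau> b has_real_derivative u * psi_slope m \<tau> b u) (at u)"
proof -
  have "((\<lambda>u. b j * sqrt (\<tau> j - u\<^sup>2)) has_real_derivative - (u * (b j / sqrt (\<tau> j - u\<^sup>2)))) (at u)"
    if "j \<in> {1..m}" for j
    using assms[OF that] by (auto intro!: derivative_eq_intros simp: field_simps)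
  then have "(psi m \<tau> b has_real_derivative 2 * u / 2 + (\<Sum>j=1..m. - (u * (b j / sqrt (\<tau> j - u\<^sup>2))))) (at u)"
    unfolding psi_def[abs_def] by (intro DERIV_add DERIV_sum) (auto intro!: derivative_eq_intros)
  then show ?thesis
    by (simp add: psi_slope_def right_diff_distrib sum_distrib_left sum_negf)
qed

lemma psi_slope_has_real_derivative:
  assumes "\<And>j. j \<in> {1..m} \<Longrightarrow> u\<^sup>2 < \<tau> j"
  shows "(psi_slope m \<tau> b has_real_derivative - (\<Sum>j=1..m. b j * u / sqrt (\<tau> j - u\<^sup>2) ^ 3)) (at u)"
proof -
  have "((\<lambda>u. b j / sqrt (\<tau> j - u\<^sup>2)) has_real_derivative b j * u / sqrt (\<tau> j - u\<^sup>2) ^ 3) (at u)"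
    if "j \<in> {1..m}" for j
    using assms[OF that] by (auto intro!: derivative_eq_intros simp: field_simps power3_eq_cube)
  then have "(psi_slope m \<tau> b has_real_derivative 0 - (\<Sum>j=1..m. b j * u / sqrt (\<tau> j - u\<^sup>2) ^ 3)) (at u)"
    unfolding psi_slope_def[abs_def] by (intro DERIV_diff DERIV_sum DERIV_const) auto
  then show ?thesis
    by simp
qed

lemma psi_slope_plus_curvature_antimono:
  assumes b_nonneg: "\<And>j. j \<in> {1..m} \<Longrightarrow> 0 \<le> b j" and v_lt: "\<And>j. j \<in> {1..m} \<Longrightarrow> v\<^sup>2 < \<tau> j"
    and "0 \<le> u" "u \<le> v"
  shows "psi_slope m \<tau> b v + psi_curvature m \<tau> b * v\<^sup>2 / 2 \<le> psi_slope m \<tau> b u + psi_curvature m \<tau> b * u\<^sup>2 / 2"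
proof (rule DERIV_nonpos_imp_nonincreasing[OF \<open>u \<le> v\<close>])
  fix x assume x: "u \<le> x" "x \<le> v"
  have x_lt: "x\<^sup>2 < \<tau> j" if "j \<in> {1..m}" for j
    using v_lt[OF that] power_mono[of x v 2] x \<open>0 \<le> u\<close> by linarith
  have "b j * x / sqrt (\<tau> j) ^ 3 \<le> b j * x / sqrt (\<tau> j - x\<^sup>2) ^ 3" if j: "j \<in> {1..m}" for j
  proof -
    have "0 < \<tau> j"
      using x_lt[OF j] zero_le_power2[of x] by linarith
    then show ?thesis
      using x_lt[OF j] b_nonneg[OF j] x \<open>0 \<le> u\<close>
      by (intro divide_left_mono power_mono mult_pos_pos) auto
  qed
  then have "psi_curvature m \<tau> b * x \<le> (\<Sum>j=1..m. b j * x / sqrt (\<tau> j - x\<^sup>2) ^ 3)"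
    unfolding psi_curvature_def sum_distrib_right by (intro sum_mono) auto
  moreover have "((\<lambda>x. psi_slope m \<tau> b x + psi_curvature m \<tau> b * x\<^sup>2 / 2) has_real_derivative
      - (\<Sum>j=1..m. b j * x / sqrt (\<tau> j - x\<^sup>2) ^ 3) + psi_curvature m \<tau> b * x) (at x)"
    by (intro DERIV_add psi_slope_has_real_derivative x_lt) (auto intro!: derivative_eq_intros)
  ultimately show "\<exists>y. ((\<lambda>x. psi_slope m \<tau> b x + psi_curvature m \<tau> b * x\<^sup>2 / 2) has_real_derivative y) (at x) \<and> y \<le> 0"
    by force
qed

lemma crossing_point_with_quadratic_margin:
  fixes g :: "real \<Rightarrow> real" and \<mu> R :: real
  assumes "0 \<le> R" and g_cont: "continuous_on {0..R} g"
    and antimono: "\<And>u v. 0 \<le> u \<Longrightarrow> u \<le> v \<Longrightarrow> v \<le> R \<Longrightarrow> g v + \<mu> * v\<^sup>2 / 2 \<le> g u + \<mu> * u\<^sup>2 / 2"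
  obtains z where "z \<in> {0..R}"
    and "\<And>u. z < u \<Longrightarrow> u \<le> R \<Longrightarrow> \<mu> * (u\<^sup>2 - z\<^sup>2) / 2 \<le> - g u"
    and "\<And>u. 0 \<le> u \<Longrightarrow> u < z \<Longrightarrow> \<mu> * (z\<^sup>2 - u\<^sup>2) / 2 \<le> g u"
proof -
  obtain z where z: "z \<in> {0..R}" "z = R \<or> g z \<le> 0" "z = 0 \<or> 0 \<le> g z"
  proof (cases "g 0 \<le> 0 \<or> 0 \<le> g R")
    case True
    then show ?thesis
      using that[of 0] that[of R] \<open>0 \<le> R\<close> by auto
  next
    case False
    then obtain z where "0 \<le> z" "z \<le> R" "g z = 0"
      using IVT2'[of g R 0 0, OF _ _ \<open>0 \<le> R\<close> g_cont] by auto
    then show ?thesis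
      using that[of z] by auto
  qed
  show ?thesis
  proof (rule that[OF z(1)])
    fix u assume "z < u" "u \<le> R"
    then show "\<mu> * (u\<^sup>2 - z\<^sup>2) / 2 \<le> - g u"
      using z antimono[of z u] by (auto simp: field_simps)
  next
    fix u assume "0 \<le> u" "u < z"
    then show "\<mu> * (z\<^sup>2 - u\<^sup>2) / 2 \<le> g u"
      using z antimono[of u z] by (auto simp: field_simps)
  qed
qed

section \<open>Bounds for the truncated integral\<close>

lemma inverse_gap_of_squares_has_real_derivative:
  fixes c u z :: real
  assumes "0 < u\<^sup>2 - z\<^sup>2" "c \<noteq> 0"
  shows "((\<lambda>u. - 1 / (c * (u\<^sup>2 - z\<^sup>2))) has_real_derivative 2 * u / (c * (u\<^sup>2 - z\<^sup>2)\<^sup>2)) (at u)"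
  by (insert assms, (rule derivative_eq_intros refl | simp)+, simp add: power2_eq_square)

lemma ln_odds_of_square_has_real_derivative:
  fixes u w :: real
  assumes "0 < u" "u\<^sup>2 < w"
  shows "((\<lambda>u. ln (u\<^sup>2) - ln (w - u\<^sup>2)) has_real_derivative 2 * w / (u * (w - u\<^sup>2))) (at u)"
proof -
  have "((\<lambda>u. ln (u\<^sup>2) - ln (w - u\<^sup>2)) has_real_derivative 2 / u + 2 * u / (w - u\<^sup>2)) (at u)"
    using assms by (auto intro!: derivative_eq_intros simp: power2_eq_square field_simps)
  moreover have "2 / u + 2 * u / (w - u\<^sup>2) = 2 * w / (u * (w - u\<^sup>2))"
    using assms by (simp add: field_simps power2_eq_square)
  ultimately show ?thesis
    by simp
qed

lemma ln_odds_increment_le: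
  fixes d s t w :: real
  assumes "0 < d" "d \<le> s" "s \<le> t" "t \<le> w - d"
  shows "(ln t - ln (w - t)) - (ln s - ln (w - s)) \<le> 2 * (w / d)"
proof -
  have pos: "0 < s" "0 < t" "0 < w" "0 < w - s" "0 < w - t"
    using assms by linarith+
  then have "ln t \<le> ln w" "ln d \<le> ln s" "ln (w - s) \<le> ln w" "ln d \<le> ln (w - t)"
    using assms by simp_all
  moreover have "ln w - ln d = ln (w / d)"
    using pos \<open>0 < d\<close> by (simp add: ln_div)
  moreover have "ln (w / d) < w / d"
    using pos \<open>0 < d\<close> by (intro ln_less_self) simp
  ultimately show ?thesis
    by linarith
qed

locale cutoff_function =
  fixes chi :: "real \<Rightarrow> real"
  assumes smooth: "smooth_fun chi" and mono: "mono chi"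
    and vanishes_below: "\<And>l. l \<le> 1/4 \<Longrightarrow> chi l = 0"
    and equals_one_above: "\<And>l. 1/2 \<le> l \<Longrightarrow> chi l = 1"
begin

lemma has_real_derivative: "(chi has_real_derivative deriv chi x) (at x)"
  using smooth unfolding smooth_fun_def by (metis DERIV_deriv_iff_real_differentiable funpow_0)

lemma deriv_nonneg: "0 \<le> deriv chi x"
  by (rule mono_on_imp_deriv_nonneg[of UNIV chi]) (use mono has_real_derivative in \<open>auto simp: mono_on_def monoD\<close>)

lemma nonneg: "0 \<le> chi x"
  using monoD[OF mono, of "min x (1/4)" x] vanishes_below[of "min x (1/4)"] by simp

lemma le_one: "chi x \<le> 1"
  using monoD[OF mono, of x "max x (1/2)"] equals_one_above[of "max x (1/2)"] by simp

lemma rescaled_has_real_derivative: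
  "((\<lambda>u. chi (u / s)) has_real_derivative deriv chi (u / s) / s) (at u)"
proof -
  have "((\<lambda>u. u / s) has_real_derivative 1 / s) (at u)"
    by (rule DERIV_cdivide[OF DERIV_ident])
  from DERIV_chain2[OF has_real_derivative this] show ?thesis
    by simp
qed

end

locale cutoff_oscillatory_integral = cutoff_function chi for chi +
  fixes a0 :: real and m :: nat and \<tau> b :: "nat \<Rightarrow> real" and \<omega> \<omega>' :: "real \<Rightarrow> real" and k :: nat
  assumes m_ge_1: "1 \<le> m"
    and \<tau>_decreasing: "\<And>j. j \<in> {1..<m} \<Longrightarrow> \<tau> (Suc j) \<le> \<tau> j" and \<tau>_m_pos: "0 < \<tau> m"
    and b_pos: "\<And>j. j \<in> {1..m} \<Longrightarrow> 0 < b j"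
    and \<omega>_deriv: "\<And>u. 0 < u \<Longrightarrow> (\<omega> has_real_derivative \<omega>' u) (at u)"
    and \<omega>_bound: "\<And>u. 0 < u \<Longrightarrow> \<bar>\<omega> u\<bar> \<le> a0"
    and \<omega>'_bound: "\<And>u. 0 < u \<Longrightarrow> \<bar>\<omega>' u\<bar> \<le> a0 / u"
    and k_in: "k \<in> {1..m}"
begin

abbreviation g :: "real \<Rightarrow> real" where "g \<equiv> psi_slope m \<tau> b"
abbreviation \<mu> :: real where "\<mu> \<equiv> psi_curvature m \<tau> b"

definition R :: real where "R = sqrt (\<tau> m) / 2"
definition M :: real where "M = a0 / sqrt (\<tau> k)"

definition amplitude :: "real \<Rightarrow> real" where
  "amplitude u = (1 - chi (u / sqrt (\<tau> m))) * \<omega> u / sqrt (\<tau> k)"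

definition amplitude' :: "real \<Rightarrow> real" where
  "amplitude' u = ((1 - chi (u / sqrt (\<tau> m))) * \<omega>' u
     - deriv chi (u / sqrt (\<tau> m)) / sqrt (\<tau> m) * \<omega> u) / sqrt (\<tau> k)"

definition F :: "real \<Rightarrow> complex" where
  "F u = exp (\<i> * complex_of_real (psi m \<tau> b u)) * complex_of_real (u * amplitude u)"

lemma a0_nonneg: "0 \<le> a0"
  using \<omega>_bound[of 1] abs_ge_zero[of "\<omega> 1"] by linarith

lemma \<tau>_antimono:
  assumes "1 \<le> i" "i \<le> j" "j \<le> m"
  shows "\<tau> j \<le> \<tau> i"
  using assms(2,3)
proof (induction j rule: dec_induct)
  case (step n)
  have "\<tau> (Suc n) \<le> \<tau> n"
    using \<tau>_decreasing assms(1) step.hyps step.prems by simp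
  with step show ?case
    by simp
qed simp

lemma \<tau>_bounds:
  assumes "j \<in> {1..m}"
  shows "\<tau> m \<le> \<tau> j" "\<tau> j \<le> \<tau> 1" "0 < \<tau> j"
  using \<tau>_antimono[of j m] \<tau>_antimono[of 1 j] assms \<tau>_m_pos by auto

lemma R_pos: "0 < R"
  unfolding R_def using \<tau>_m_pos by simp

lemma R_square: "R\<^sup>2 = \<tau> m / 4"
  unfolding R_def using \<tau>_m_pos by (simp add: power_divide)

lemma M_nonneg: "0 \<le> M"
  unfolding M_def using a0_nonneg \<tau>_bounds(3)[OF k_in] by simp

lemma square_le_quarter_\<tau>:
  assumes "0 \<le> u" "u \<le> R" "j \<in> {1..m}"
  shows "u\<^sup>2 \<le> \<tau> j / 4"
proof -
  have "u\<^sup>2 \<le> R\<^sup>2"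
    using assms by (intro power_mono) auto
  then show ?thesis
    using \<tau>_bounds(1)[OF assms(3)] unfolding R_square by simp
qed

lemma square_lt_\<tau>: "0 \<le> u \<Longrightarrow> u \<le> R \<Longrightarrow> j \<in> {1..m} \<Longrightarrow> u\<^sup>2 < \<tau> j"
  using square_le_quarter_\<tau> \<tau>_bounds(3) by fastforce

lemma psi_deriv: "0 \<le> u \<Longrightarrow> u \<le> R \<Longrightarrow> (psi m \<tau> b has_real_derivative u * g u) (at u)"
  by (intro psi_has_real_derivative square_lt_\<tau>)

lemma slope_deriv:
  "0 \<le> u \<Longrightarrow> u \<le> R \<Longrightarrow> (g has_real_derivative - (\<Sum>j=1..m. b j * u / sqrt (\<tau> j - u\<^sup>2) ^ 3)) (at u)"
  by (intro psi_slope_has_real_derivative square_lt_\<tau>)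

lemma slope_deriv_nonpos:
  assumes "0 \<le> u" "u \<le> R"
  shows "- (\<Sum>j=1..m. b j * u / sqrt (\<tau> j - u\<^sup>2) ^ 3) \<le> 0"
proof -
  have "0 \<le> b j * u / sqrt (\<tau> j - u\<^sup>2) ^ 3" if "j \<in> {1..m}" for j
    using b_pos[OF that] square_lt_\<tau>[OF assms that] assms
    by (intro divide_nonneg_pos mult_nonneg_nonneg) auto
  then show ?thesis
    by (simp add: sum_nonneg del: atLeastAtMost_iff)
qed

lemma slope_continuous_on: "continuous_on {0..R} g"
  by (rule continuous_at_imp_continuous_on) (auto intro: DERIV_isCont[OF slope_deriv])

lemma amplitude_deriv:
  assumes "0 < u"
  shows "(amplitude has_real_derivative amplitude' u) (at u)"
proof -
  have "((\<lambda>u. (1 - chi (u / sqrt (\<tau> m))) * \<omega> u / sqrt (\<tau> k)) has_real_derivative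
      ((1 - chi (u / sqrt (\<tau> m))) * \<omega>' u + (0 - deriv chi (u / sqrt (\<tau> m)) / sqrt (\<tau> m)) * \<omega> u)
        / sqrt (\<tau> k)) (at u)"
    using \<omega>_deriv assms
    by (intro DERIV_cdivide DERIV_mult' DERIV_diff DERIV_const rescaled_has_real_derivative) auto
  then show ?thesis
    by (simp add: amplitude_def[abs_def] amplitude'_def)
qed

lemma amplitude_bound:
  assumes "0 < u"
  shows "\<bar>amplitude u\<bar> \<le> M"
proof -
  have "\<bar>1 - chi (u / sqrt (\<tau> m))\<bar> * \<bar>\<omega> u\<bar> \<le> 1 * a0"
    using nonneg le_one \<omega>_bound assms by (intro mult_mono) auto
  then show ?thesis
    unfolding amplitude_def M_def using \<tau>_bounds(3)[OF k_in] by (simp add: abs_mult divide_right_mono)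
qed

lemma amplitude'_bound:
  assumes "0 < u"
  shows "\<bar>amplitude' u\<bar> \<le> M * (1 / u + deriv chi (u / sqrt (\<tau> m)) / sqrt (\<tau> m))"
proof -
  define D where "D = deriv chi (u / sqrt (\<tau> m)) / sqrt (\<tau> m)"
  have "D \<ge> 0"
    unfolding D_def using deriv_nonneg \<tau>_m_pos by simp
  have "\<bar>(1 - chi (u / sqrt (\<tau> m))) * \<omega>' u\<bar> \<le> 1 * (a0 / u)"
    unfolding abs_mult using nonneg le_one \<omega>'_bound assms by (intro mult_mono) auto
  moreover have "\<bar>D * \<omega> u\<bar> \<le> D * a0"
    using \<omega>_bound assms \<open>D \<ge> 0\<close> by (simp add: abs_mult mult_left_mono)
  ultimately have "\<bar>(1 - chi (u / sqrt (\<tau> m))) * \<omega>' u - D * \<omega> u\<bar> \<le> a0 * (1 / u + D)"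
    using abs_triangle_ineq4[of "(1 - chi (u / sqrt (\<tau> m))) * \<omega>' u" "D * \<omega> u"]
    by (simp add: algebra_simps)
  then show ?thesis
    unfolding amplitude'_def M_def D_def[symmetric] using \<tau>_bounds(3)[OF k_in]
    by (simp add: abs_div divide_right_mono)
qed

lemma F_eq_0: "R \<le> u \<Longrightarrow> F u = 0"
  unfolding F_def amplitude_def R_def using \<tau>_m_pos equals_one_above[of "u / sqrt (\<tau> m)"]
  by (simp add: field_simps)

lemma norm_F_le: "0 \<le> u \<Longrightarrow> norm (F u) \<le> M * u"
  using amplitude_bound[of u] M_nonneg
  by (cases "u = 0") (auto simp: F_def norm_mult abs_mult mult.commute mult_left_mono)

lemma F_continuous_on: "continuous_on {0..R} F"
proof -
  have "continuous (at u within {0..R}) F" if u: "u \<in> {0..R}" for u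
  proof (cases "u = 0")
    case False
    then have "isCont F u"
      unfolding F_def using u DERIV_isCont[OF psi_deriv] DERIV_isCont[OF amplitude_deriv]
      by (intro continuous_intros) auto
    then show ?thesis
      by (rule continuous_at_imp_continuous_within)
  next
    case True
    have "eventually (\<lambda>x. norm (F x) \<le> M * x) (at 0 within {0..R})"
      unfolding eventually_at_filter by (intro always_eventually) (use norm_F_le in auto)
    moreover have "((\<lambda>x. M * x) \<longlongrightarrow> 0) (at 0 within {0..R})"
      by (auto intro!: tendsto_eq_intros)
    ultimately have "(F \<longlongrightarrow> 0) (at 0 within {0..R})"
      by (rule Lim_null_comparison)
    then show ?thesis
      unfolding continuous_within True by (simp add: F_def)
  qed
  then show ?thesis
    by (simp add: continuous_on_eq_continuous_within)
qed

lemma F_integrable_on: "0 \<le> p \<Longrightarrow> q \<le> R \<Longrightarrow> F integrable_on {p..q}"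
  by (intro integrable_continuous_interval continuous_on_subset[OF F_continuous_on]) auto

lemma norm_integral_F_le:
  assumes "0 \<le> p" "p \<le> q" "q \<le> R"
  shows "norm (integral {p..q} F) \<le> M * (q\<^sup>2 - p\<^sup>2) / 2"
proof -
  have "norm (integral {p..q} F) \<le> integral {p..q} (\<lambda>x. M * x)"
    using assms norm_F_le
    by (intro integral_norm_bound_integral F_integrable_on integrable_continuous_interval)
       (auto intro!: continuous_intros)
  also have "\<dots> = M * (q\<^sup>2 - p\<^sup>2) / 2"
    using assms by simp
  finally show ?thesis .
qed

lemma integral_eq_integral_F:
  "integral {0<..} (\<lambda>u. exp (\<i> * complex_of_real (psi m \<tau> b u))
      * complex_of_real ((1 - chi (u / sqrt (\<tau> m))) * \<omega> u * (u / sqrt (\<tau> k))))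
   = integral {0..R} F"
proof -
  have "(1 - chi (u / sqrt (\<tau> m))) * \<omega> u * (u / sqrt (\<tau> k)) = u * amplitude u" for u
    unfolding amplitude_def by simp
  then have "(\<lambda>u. exp (\<i> * complex_of_real (psi m \<tau> b u))
      * complex_of_real ((1 - chi (u / sqrt (\<tau> m))) * \<omega> u * (u / sqrt (\<tau> k)))) = F"
    unfolding F_def[abs_def] by simp
  moreover have "integral {0<..} F = integral {0..R} F"
  proof (rule integral_spike_set)
    have "{x \<in> {0<..} - {0..R}. F x \<noteq> 0} = {}"
      using F_eq_0[OF less_imp_le] by (auto simp: not_le)
    then show "negligible {x \<in> {0<..} - {0..R}. F x \<noteq> 0}"
      by (metis negligible_empty)
    show "negligible {x \<in> {0..R} - {0<..}. F x \<noteq> 0}"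
      by (rule negligible_subset[OF negligible_sing[of 0]]) auto
  qed
  ultimately show ?thesis
    by simp
qed

lemma integral_F_crude_bound: "norm (integral {0..R} F) \<le> a0 * sqrt (\<tau> m) / 8"
proof -
  have "norm (integral {0..R} F) \<le> M * R\<^sup>2 / 2"
    using norm_integral_F_le[of 0 R] R_pos by simp
  also have "\<dots> = a0 * (sqrt (\<tau> m) * sqrt (\<tau> m)) / (8 * sqrt (\<tau> k))"
    unfolding M_def R_square using \<tau>_m_pos by simp
  also have "\<dots> \<le> a0 * (sqrt (\<tau> m) * sqrt (\<tau> k)) / (8 * sqrt (\<tau> k))"
    using \<tau>_bounds[OF k_in] \<tau>_m_pos a0_nonneg by (intro divide_right_mono mult_left_mono) auto
  also have "\<dots> = a0 * sqrt (\<tau> m) / 8"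
    using \<tau>_bounds(3)[OF k_in] by simp
  finally show ?thesis .
qed

text \<open>The cutoff part of \<open>amplitude'\<close> costs only \<open>M / L\<close> because \<open>chi\<close> is monotone with values
  in \<open>[0, 1]\<close>; \<open>P\<close> absorbs the part coming from \<open>\<bar>\<omega>'\<bar> \<le> a0 / u\<close>.\<close>
lemma integral_F_nonstationary_bound:
  assumes pq: "0 < p" "p \<le> q" "q \<le> R" and "0 < L"
    and g_ge: "\<And>u. u \<in> {p..q} \<Longrightarrow> L \<le> \<bar>g u\<bar>"
    and dP: "\<And>u. u \<in> {p..q} \<Longrightarrow> (P has_real_derivative \<rho> u) (at u)"
    and \<rho>_ge: "\<And>u. u \<in> {p..q} \<Longrightarrow> 1 / (u * \<bar>g u\<bar>) \<le> \<rho> u"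
  shows "norm (integral {p..q} F) \<le> 5 * M / L + M * (P q - P p)"
proof -
  define \<chi>' where "\<chi>' u = deriv chi (u / sqrt (\<tau> m)) / sqrt (\<tau> m)" for u
  have \<chi>'_nonneg: "0 \<le> \<chi>' u" for u
    unfolding \<chi>'_def using deriv_nonneg \<tau>_m_pos by simp
  have U: "0 < u" "u \<le> R" if "u \<in> {p..q}" for u
    using that pq by auto
  have "norm (integral {p..q} F)
      \<le> 4 * M / L + ((M * P q + M / L * chi (q / sqrt (\<tau> m))) - (M * P p + M / L * chi (p / sqrt (\<tau> m))))"
    unfolding F_def
  proof (rule oscillatory_integral_ibp_bound[where g' = "\<lambda>u. - (\<Sum>j=1..m. b j * u / sqrt (\<tau> j - u\<^sup>2) ^ 3)"
        and c' = amplitude' and p = "\<lambda>u. M * \<rho> u + M / L * \<chi>' u"])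
    fix u assume u: "u \<in> {p..q}"
    show "(psi m \<tau> b has_real_derivative u * g u) (at u)"
      using U[OF u] by (intro psi_deriv) auto
    show "(g has_real_derivative - (\<Sum>j=1..m. b j * u / sqrt (\<tau> j - u\<^sup>2) ^ 3)) (at u)"
      using U[OF u] by (intro slope_deriv) auto
    show "- (\<Sum>j=1..m. b j * u / sqrt (\<tau> j - u\<^sup>2) ^ 3) \<le> 0"
      using U[OF u] by (intro slope_deriv_nonpos) auto
    show "(amplitude has_real_derivative amplitude' u) (at u)"
      using U[OF u] by (intro amplitude_deriv)
    show "\<bar>amplitude u\<bar> \<le> M"
      using U[OF u] by (intro amplitude_bound)
    show "((\<lambda>u. M * P u + M / L * chi (u / sqrt (\<tau> m))) has_real_derivative M * \<rho> u + M / L * \<chi>' u) (at u)"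
      unfolding \<chi>'_def by (intro DERIV_add DERIV_cmult dP[OF u] rescaled_has_real_derivative)
    have "\<bar>amplitude' u\<bar> / \<bar>g u\<bar> \<le> M * (1 / u + \<chi>' u) / \<bar>g u\<bar>"
      using amplitude'_bound[OF U(1)[OF u]] unfolding \<chi>'_def by (simp add: divide_right_mono)
    also have "\<dots> = M * (1 / (u * \<bar>g u\<bar>)) + M * \<chi>' u / \<bar>g u\<bar>"
      by (simp add: distrib_left add_divide_distrib)
    also have "\<dots> \<le> M * \<rho> u + M / L * \<chi>' u"
      using \<rho>_ge[OF u] g_ge[OF u] \<open>0 < L\<close> M_nonneg \<chi>'_nonneg[of u]
      by (intro add_mono mult_left_mono) (auto simp: divide_left_mono mult_nonneg_nonneg)
    finally show "\<bar>amplitude' u\<bar> / \<bar>g u\<bar> \<le> M * \<rho> u + M / L * \<chi>' u" .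
  qed (use pq \<open>0 < L\<close> g_ge in auto)
  also have "\<dots> \<le> 4 * M / L + (M * (P q - P p) + M / L)"
  proof -
    have "chi (q / sqrt (\<tau> m)) - chi (p / sqrt (\<tau> m)) \<le> 1"
      using le_one[of "q / sqrt (\<tau> m)"] nonneg[of "p / sqrt (\<tau> m)"] by linarith
    then have "M / L * (chi (q / sqrt (\<tau> m)) - chi (p / sqrt (\<tau> m))) \<le> M / L * 1"
      using M_nonneg \<open>0 < L\<close> by (intro mult_left_mono) auto
    then show ?thesis
      by (simp add: algebra_simps)
  qed
  finally show ?thesis
    by (simp add: field_simps)
qed

lemma M_mult_R_le: "M * R \<le> a0 / 2"
proof -
  have "M * R = a0 / 2 * (sqrt (\<tau> m) / sqrt (\<tau> k))"
    unfolding M_def R_def by simp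
  also have "\<dots> \<le> a0 / 2 * 1"
    using \<tau>_bounds[OF k_in] \<tau>_m_pos a0_nonneg by (intro mult_left_mono) auto
  finally show ?thesis
    by simp
qed

lemma integral_F_bound_if_slope_bounded_away:
  assumes "4 \<le> \<tau> m" and g_ge: "\<And>u. u \<in> {0..R} \<Longrightarrow> 1 / 2 \<le> \<bar>g u\<bar>"
  shows "norm (integral {0..R} F) \<le> 6 * a0"
proof -
  have "1 \<le> R"
    unfolding R_def using real_sqrt_le_mono[OF assms(1)] by simp
  have "M \<le> a0 / 2"
    unfolding M_def using \<tau>_bounds(1)[OF k_in] assms(1) real_sqrt_le_mono[of 4 "\<tau> k"] a0_nonneg
    by (intro divide_left_mono) auto
  have "norm (integral {1..R} F) \<le> 5 * M / (1 / 2) + M * (2 * ln R - 2 * ln 1)"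
  proof (rule integral_F_nonstationary_bound[where P = "\<lambda>u. 2 * ln u" and \<rho> = "\<lambda>u. 2 / u"])
    fix u assume u: "u \<in> {1..R}"
    show "((\<lambda>u. 2 * ln u) has_real_derivative 2 / u) (at u)"
      using u by (auto intro!: derivative_eq_intros)
    have "1 / (u * \<bar>g u\<bar>) \<le> 1 / (u * (1 / 2))"
      using u g_ge[of u] by (intro divide_left_mono mult_left_mono) auto
    then show "1 / (u * \<bar>g u\<bar>) \<le> 2 / u"
      by simp
  qed (use \<open>1 \<le> R\<close> g_ge in auto)
  also have "\<dots> \<le> 10 * M + M * (2 * R - 2)"
    using ln_le_minus_one[of R] \<open>1 \<le> R\<close> M_nonneg by (simp add: mult_left_mono)
  finally have far: "norm (integral {1..R} F) \<le> 8 * M + 2 * (M * R)"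
    by (simp add: algebra_simps)
  have near: "norm (integral {0..1} F) \<le> M / 2"
    using norm_integral_F_le[of 0 1] \<open>1 \<le> R\<close> by simp
  have "integral {0..1} F + integral {1..R} F = integral {0..R} F"
    using \<open>1 \<le> R\<close> by (intro Henstock_Kurzweil_Integration.integral_combine F_integrable_on) auto
  then have "norm (integral {0..R} F) \<le> norm (integral {0..1} F) + norm (integral {1..R} F)"
    by (metis norm_triangle_ineq)
  then show ?thesis
    using near far \<open>M \<le> a0 / 2\<close> M_mult_R_le a0_nonneg by linarith
qed

lemma curvature_pos: "0 < \<mu>"
  unfolding psi_curvature_def using m_ge_1 b_pos \<tau>_bounds(3) by (intro sum_pos) auto

lemma integral_F_beyond_crossing:
  assumes "0 < d" and cross: "\<And>u. z < u \<Longrightarrow> u \<le> R \<Longrightarrow> \<mu> * (u\<^sup>2 - z\<^sup>2) / 2 \<le> - g u"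
    and pq: "0 < p" "p \<le> q" "q \<le> R" "z\<^sup>2 + d \<le> p\<^sup>2"
  shows "norm (integral {p..q} F) \<le> 11 * M / (\<mu> * d)"
proof -
  define P where "P u = - 1 / (\<mu> * (u\<^sup>2 - z\<^sup>2))" for u
  have U: "z\<^sup>2 + d \<le> u\<^sup>2" "z < u" if "u \<in> {p..q}" for u
  proof -
    have "p\<^sup>2 \<le> u\<^sup>2"
      using that pq by (intro power_mono) auto
    then show "z\<^sup>2 + d \<le> u\<^sup>2"
      using pq by simp
    then show "z < u"
      using that pq \<open>0 < d\<close> by (intro power_less_imp_less_base[of z 2 u]) auto
  qed
  have "norm (integral {p..q} F) \<le> 5 * M / (\<mu> * d / 2) + M * (P q - P p)"
  proof (rule integral_F_nonstationary_bound[where \<rho> = "\<lambda>u. 2 * u / (\<mu> * (u\<^sup>2 - z\<^sup>2)\<^sup>2)"])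
    fix u assume u: "u \<in> {p..q}"
    have pos: "0 < u\<^sup>2 - z\<^sup>2"
      using U(1)[OF u] \<open>0 < d\<close> by simp
    have g_ge: "\<mu> * (u\<^sup>2 - z\<^sup>2) / 2 \<le> \<bar>g u\<bar>"
      using cross[OF U(2)[OF u]] u pq by auto
    have "\<mu> * d \<le> \<mu> * (u\<^sup>2 - z\<^sup>2)"
      using U(1)[OF u] curvature_pos by (intro mult_left_mono) auto
    then show "\<mu> * d / 2 \<le> \<bar>g u\<bar>"
      using g_ge by linarith
    show "(P has_real_derivative 2 * u / (\<mu> * (u\<^sup>2 - z\<^sup>2)\<^sup>2)) (at u)"
      unfolding P_def[abs_def] using pos curvature_pos by (intro inverse_gap_of_squares_has_real_derivative) auto
    have "0 < \<mu> * (u\<^sup>2 - z\<^sup>2) / 2"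
      using pos curvature_pos by simp
    then have "1 / (u * \<bar>g u\<bar>) \<le> 1 / (u * (\<mu> * (u\<^sup>2 - z\<^sup>2) / 2))"
      using g_ge u pq by (intro divide_left_mono mult_left_mono mult_pos_pos) auto
    also have "\<dots> = 2 / (\<mu> * (u\<^sup>2 - z\<^sup>2)) * (1 / u)"
      by simp
    also have "\<dots> \<le> 2 / (\<mu> * (u\<^sup>2 - z\<^sup>2)) * (u / (u\<^sup>2 - z\<^sup>2))"
      using u pq pos curvature_pos by (intro mult_left_mono) (auto simp: field_simps power2_eq_square)
    also have "\<dots> = 2 * u / (\<mu> * (u\<^sup>2 - z\<^sup>2)\<^sup>2)"
      by (simp add: power2_eq_square)
    finally show "1 / (u * \<bar>g u\<bar>) \<le> 2 * u / (\<mu> * (u\<^sup>2 - z\<^sup>2)\<^sup>2)" .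
  qed (use pq curvature_pos \<open>0 < d\<close> in auto)
  also have "\<dots> \<le> 10 * M / (\<mu> * d) + M * (1 / (\<mu> * d))"
  proof -
    have "1 / (\<mu> * (p\<^sup>2 - z\<^sup>2)) \<le> 1 / (\<mu> * d)"
      using pq U(1)[of p] \<open>0 < d\<close> curvature_pos by (intro divide_left_mono mult_left_mono mult_pos_pos) auto
    moreover have "0 \<le> 1 / (\<mu> * (q\<^sup>2 - z\<^sup>2))"
      using U(1)[of q] pq \<open>0 < d\<close> curvature_pos by simp
    moreover have "P q - P p = 1 / (\<mu> * (p\<^sup>2 - z\<^sup>2)) - 1 / (\<mu> * (q\<^sup>2 - z\<^sup>2))"
      unfolding P_def by simp
    ultimately have "P q - P p \<le> 1 / (\<mu> * d)"
      by linarith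
    then show ?thesis
      using M_nonneg by (intro add_mono mult_left_mono) simp_all
  qed
  finally show ?thesis
    by (simp add: field_simps)
qed

lemma integral_F_before_crossing:
  assumes "0 < d" "0 \<le> z" and cross: "\<And>u. 0 \<le> u \<Longrightarrow> u < z \<Longrightarrow> \<mu> * (z\<^sup>2 - u\<^sup>2) / 2 \<le> g u"
    and pq: "0 < p" "p \<le> q" "q \<le> R" "d \<le> p\<^sup>2" "q\<^sup>2 \<le> z\<^sup>2 - d"
  shows "norm (integral {p..q} F) \<le> 12 * M / (\<mu> * d)"
proof -
  define w where "w = z\<^sup>2"
  define P where "P u = (ln (u\<^sup>2) - ln (w - u\<^sup>2)) / (\<mu> * w)" for u
  have "p\<^sup>2 \<le> q\<^sup>2"
    using pq by (intro power_mono) auto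
  then have "0 < w"
    using pq \<open>0 < d\<close> unfolding w_def by linarith
  have U: "0 < u" "d \<le> u\<^sup>2" "u\<^sup>2 \<le> w - d" "u < z" if "u \<in> {p..q}" for u
  proof -
    show "0 < u"
      using that pq by simp
    have "p\<^sup>2 \<le> u\<^sup>2" "u\<^sup>2 \<le> q\<^sup>2"
      using that pq by (auto intro: power_mono)
    then show "d \<le> u\<^sup>2" "u\<^sup>2 \<le> w - d"
      using pq unfolding w_def by linarith+
    then show "u < z"
      using \<open>0 < d\<close> \<open>0 \<le> z\<close> unfolding w_def by (intro power_less_imp_less_base[of u 2 z]) auto
  qed
  have "norm (integral {p..q} F) \<le> 5 * M / (\<mu> * d / 2) + M * (P q - P p)"
  proof (rule integral_F_nonstationary_bound[where \<rho> = "\<lambda>u. 2 * w / (u * (w - u\<^sup>2)) / (\<mu> * w)"])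
    fix u assume u: "u \<in> {p..q}"
    have pos: "0 < w - u\<^sup>2"
      using U[OF u] \<open>0 < d\<close> by linarith
    have g_ge: "\<mu> * (w - u\<^sup>2) / 2 \<le> \<bar>g u\<bar>"
      using cross[OF _ U(4)[OF u]] U(1)[OF u] unfolding w_def by force
    have "\<mu> * d \<le> \<mu> * (w - u\<^sup>2)"
      using U(3)[OF u] curvature_pos by (intro mult_left_mono) auto
    then show "\<mu> * d / 2 \<le> \<bar>g u\<bar>"
      using g_ge by linarith
    show "(P has_real_derivative 2 * w / (u * (w - u\<^sup>2)) / (\<mu> * w)) (at u)"
      unfolding P_def[abs_def] using U(1)[OF u] pos
      by (intro DERIV_cdivide ln_odds_of_square_has_real_derivative) auto
    have "0 < \<mu> * (w - u\<^sup>2) / 2"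
      using pos curvature_pos by simp
    then have "1 / (u * \<bar>g u\<bar>) \<le> 1 / (u * (\<mu> * (w - u\<^sup>2) / 2))"
      using g_ge U(1)[OF u] by (intro divide_left_mono mult_left_mono mult_pos_pos) auto
    also have "\<dots> = 2 * w / (u * (w - u\<^sup>2)) / (\<mu> * w)"
    proof -
      have "w \<noteq> 0" "\<mu> \<noteq> 0" "u * (w - u\<^sup>2) \<noteq> 0"
        using \<open>0 < w\<close> curvature_pos U(1)[OF u] pos by auto
      then show ?thesis
        by (simp add: divide_divide_eq_left)
    qed
    finally show "1 / (u * \<bar>g u\<bar>) \<le> 2 * w / (u * (w - u\<^sup>2)) / (\<mu> * w)" .
  qed (use pq curvature_pos \<open>0 < d\<close> in auto)
  also have "\<dots> \<le> 10 * M / (\<mu> * d) + M * (2 / (\<mu> * d))"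
  proof -
    have "P q - P p \<le> 2 * (w / d) / (\<mu> * w)"
      unfolding P_def diff_divide_distrib[symmetric] using U[of p] U[of q] pq \<open>0 < w\<close> curvature_pos
      by (intro divide_right_mono ln_odds_increment_le[OF \<open>0 < d\<close>]) auto
    also have "\<dots> = 2 / (\<mu> * d)"
      using curvature_pos \<open>0 < d\<close> \<open>0 < w\<close> by (simp add: field_simps)
    finally show ?thesis
      using M_nonneg by (intro add_mono mult_left_mono) simp_all
  qed
  finally show ?thesis
    by (simp add: field_simps)
qed

lemma slope_crossing_point:
  obtains z where "z \<in> {0..R}"
    and "\<And>u. z < u \<Longrightarrow> u \<le> R \<Longrightarrow> \<mu> * (u\<^sup>2 - z\<^sup>2) / 2 \<le> - g u"
    and "\<And>u. 0 \<le> u \<Longrightarrow> u < z \<Longrightarrow> \<mu> * (z\<^sup>2 - u\<^sup>2) / 2 \<le> g u"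
proof -
  have "g v + \<mu> * v\<^sup>2 / 2 \<le> g u + \<mu> * u\<^sup>2 / 2" if "0 \<le> u" "u \<le> v" "v \<le> R" for u v
    using that b_pos square_lt_\<tau>[of v] by (intro psi_slope_plus_curvature_antimono) (simp_all add: less_imp_le)
  from crossing_point_with_quadratic_margin[OF less_imp_le[OF R_pos] slope_continuous_on this] that
  show ?thesis
    by blast
qed

lemma integral_F_up_to_crossing:
  assumes "0 < d" "0 \<le> z" and before: "\<And>u. 0 \<le> u \<Longrightarrow> u < z \<Longrightarrow> \<mu> * (z\<^sup>2 - u\<^sup>2) / 2 \<le> g u"
    and q: "0 \<le> q" "q \<le> R" "q\<^sup>2 \<le> max 0 (z\<^sup>2 - d)"
  shows "norm (integral {0..q} F) \<le> M * d / 2 + 12 * M / (\<mu> * d)"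
proof -
  have "0 \<le> 12 * M / (\<mu> * d)"
    using M_nonneg curvature_pos \<open>0 < d\<close> by simp
  show ?thesis
  proof (cases "q\<^sup>2 \<le> d")
    case True
    have "norm (integral {0..q} F) \<le> M * (q\<^sup>2 - 0\<^sup>2) / 2"
      using q by (intro norm_integral_F_le) auto
    also have "\<dots> \<le> M * d / 2"
      using True M_nonneg by (simp add: mult_left_mono)
    finally show ?thesis
      using \<open>0 \<le> 12 * M / (\<mu> * d)\<close> by linarith
  next
    case False
    define p where "p = sqrt d"
    have p: "0 < p" "p\<^sup>2 = d" "p \<le> q"
      unfolding p_def using \<open>0 < d\<close> False q(1) real_sqrt_le_mono[of d "q\<^sup>2"] by auto
    have "q\<^sup>2 \<le> z\<^sup>2 - d"
      using False q(3) \<open>0 < d\<close> by (auto simp: max_def split: if_splits)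
    have "norm (integral {0..p} F) \<le> M * (p\<^sup>2 - 0\<^sup>2) / 2"
      using p q by (intro norm_integral_F_le) auto
    moreover have "norm (integral {p..q} F) \<le> 12 * M / (\<mu> * d)"
      using p q \<open>q\<^sup>2 \<le> z\<^sup>2 - d\<close> by (intro integral_F_before_crossing[OF \<open>0 < d\<close> \<open>0 \<le> z\<close> before]) auto
    moreover have "integral {0..p} F + integral {p..q} F = integral {0..q} F"
      using p q by (intro Henstock_Kurzweil_Integration.integral_combine F_integrable_on) auto
    ultimately show ?thesis
      using norm_triangle_ineq[of "integral {0..p} F" "integral {p..q} F"] p(2) by simp
  qed
qed

lemma integral_F_stationary_bound:
  assumes "0 < d"
  shows "norm (integral {0..R} F) \<le> M * (3 * d / 2 + 23 / (\<mu> * d))"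
proof -
  obtain z where z: "z \<in> {0..R}"
    and beyond: "\<And>u. z < u \<Longrightarrow> u \<le> R \<Longrightarrow> \<mu> * (u\<^sup>2 - z\<^sup>2) / 2 \<le> - g u"
    and before: "\<And>u. 0 \<le> u \<Longrightarrow> u < z \<Longrightarrow> \<mu> * (z\<^sup>2 - u\<^sup>2) / 2 \<le> g u"
    using slope_crossing_point by blast
  define x1 where "x1 = sqrt (max 0 (z\<^sup>2 - d))"
  define x2 where "x2 = sqrt (min (R\<^sup>2) (z\<^sup>2 + d))"
  have "z\<^sup>2 \<le> R\<^sup>2"
    using z by (intro power_mono) auto
  then have x: "0 \<le> x1" "x1 \<le> x2" "x2 \<le> R" "x2\<^sup>2 - x1\<^sup>2 \<le> 2 * d"
    unfolding x1_def x2_def using R_pos \<open>0 < d\<close> real_sqrt_le_mono[of "min (R\<^sup>2) (z\<^sup>2 + d)" "R\<^sup>2"]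
    by (auto simp: max_def min_def)
  have "0 \<le> M / (\<mu> * d)"
    using M_nonneg curvature_pos \<open>0 < d\<close> by simp
  have left: "norm (integral {0..x1} F) \<le> M * d / 2 + 12 * M / (\<mu> * d)"
    using z x unfolding x1_def by (intro integral_F_up_to_crossing[OF \<open>0 < d\<close> _ before]) auto
  have middle: "norm (integral {x1..x2} F) \<le> M * d"
    using norm_integral_F_le[of x1 x2] x M_nonneg mult_left_mono[OF x(4) M_nonneg] by simp
  have right: "norm (integral {x2..R} F) \<le> 11 * M / (\<mu> * d)"
  proof (cases "R\<^sup>2 \<le> z\<^sup>2 + d")
    case True
    then show ?thesis
      unfolding x2_def using R_pos \<open>0 \<le> M / (\<mu> * d)\<close> by simp
  next
    case False
    then have "x2\<^sup>2 = z\<^sup>2 + d" "0 < x2"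
      unfolding x2_def using \<open>0 < d\<close> by (auto intro: add_nonneg_pos)
    then show ?thesis
      using x by (intro integral_F_beyond_crossing[OF \<open>0 < d\<close> beyond]) auto
  qed
  have "integral {0..R} F = integral {0..x1} F + (integral {x1..x2} F + integral {x2..R} F)"
    using x by (simp add: Henstock_Kurzweil_Integration.integral_combine F_integrable_on)
  then have "norm (integral {0..R} F)
      \<le> norm (integral {0..x1} F) + (norm (integral {x1..x2} F) + norm (integral {x2..R} F))"
    by (simp only:) (intro norm_triangle_le add_left_mono norm_triangle_ineq)
  also have "\<dots> \<le> M * d / 2 + 12 * M / (\<mu> * d) + (M * d + 11 * M / (\<mu> * d))"
    using left middle right by linarith
  also have "\<dots> = M * (3 * d / 2 + 23 / (\<mu> * d))"
    by (simp add: field_simps)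
  finally show ?thesis .
qed

lemma integral_F_le_if_curvature_ge:
  assumes "0 < d" and \<mu>_ge: "1 / (4 * d\<^sup>2) \<le> \<mu>"
  shows "norm (integral {0..R} F) \<le> 94 * M * d"
proof -
  have "1 / (\<mu> * d) \<le> 1 / (1 / (4 * d\<^sup>2) * d)"
    using \<mu>_ge \<open>0 < d\<close> curvature_pos by (intro divide_left_mono mult_right_mono mult_pos_pos) auto
  also have "\<dots> = 4 * d"
    using \<open>0 < d\<close> by (simp add: power2_eq_square)
  finally have "3 * d / 2 + 23 / (\<mu> * d) \<le> 3 * d / 2 + 23 * (4 * d)"
    by simp
  then have "M * (3 * d / 2 + 23 / (\<mu> * d)) \<le> M * (3 * d / 2 + 23 * (4 * d))"
    using M_nonneg by (rule mult_left_mono)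
  also have "\<dots> \<le> 94 * M * d"
    using M_nonneg \<open>0 < d\<close> by (simp add: algebra_simps)
  finally show ?thesis
    using integral_F_stationary_bound[OF \<open>0 < d\<close>] by linarith
qed

section \<open>Dependence on the parameters\<close>

definition \<beta> :: "nat \<Rightarrow> real" where "\<beta> j = b j / sqrt (\<tau> j)"

lemma slope_ge_half_if_small_weights:
  assumes "(\<Sum>j=1..m. \<beta> j) < 1 / 4" and "u \<in> {0..R}"
  shows "1 / 2 \<le> g u"
proof -
  have "b j / sqrt (\<tau> j - u\<^sup>2) \<le> 2 * \<beta> j" if j: "j \<in> {1..m}" for j
  proof -
    have "sqrt (\<tau> j / 4) \<le> sqrt (\<tau> j - u\<^sup>2)"
      using square_le_quarter_\<tau>[of u j] assms(2) j \<tau>_bounds(3)[OF j] by (intro real_sqrt_le_mono) auto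
    then have "sqrt (\<tau> j) / 2 \<le> sqrt (\<tau> j - u\<^sup>2)"
      by (simp add: real_sqrt_divide)
    then have "b j / sqrt (\<tau> j - u\<^sup>2) \<le> b j / (sqrt (\<tau> j) / 2)"
      using b_pos[OF j] \<tau>_bounds(3)[OF j] square_lt_\<tau>[of u j] assms(2) j by (intro divide_left_mono) auto
    then show ?thesis
      unfolding \<beta>_def by (simp add: mult.commute)
  qed
  then have "(\<Sum>j=1..m. b j / sqrt (\<tau> j - u\<^sup>2)) \<le> 2 * (\<Sum>j=1..m. \<beta> j)"
    unfolding sum_distrib_left by (intro sum_mono) auto
  then show ?thesis
    unfolding psi_slope_def using assms(1) by simp
qed

lemma slope_le_neg_three_if_large_weight:
  assumes "4 \<le> \<beta> k" and "u \<in> {0..R}"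
  shows "g u \<le> - 3"
proof -
  have pos: "0 < sqrt (\<tau> j - u\<^sup>2)" if "j \<in> {1..m}" for j
    using square_lt_\<tau>[of u j] assms(2) that by simp
  have "\<beta> k \<le> b k / sqrt (\<tau> k - u\<^sup>2)"
    unfolding \<beta>_def using b_pos[OF k_in] pos[OF k_in] \<tau>_bounds(3)[OF k_in] by (intro divide_left_mono) auto
  also have "\<dots> \<le> (\<Sum>j=1..m. b j / sqrt (\<tau> j - u\<^sup>2))"
    using k_in b_pos pos by (intro member_le_sum) (auto intro: divide_nonneg_pos less_imp_le)
  finally show ?thesis
    unfolding psi_slope_def using assms(1) by simp
qed

lemma weight_nonneg: "j \<in> {1..m} \<Longrightarrow> 0 \<le> \<beta> j"
  unfolding \<beta>_def using b_pos \<tau>_bounds(3) by (simp add: less_imp_le)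

lemma curvature_eq_sum_weights: "\<mu> = (\<Sum>j=1..m. \<beta> j / \<tau> j)"
  unfolding psi_curvature_def \<beta>_def
proof (rule sum.cong)
  fix j assume "j \<in> {1..m}"
  then have "0 < \<tau> j"
    by (rule \<tau>_bounds(3))
  then show "b j / sqrt (\<tau> j) ^ 3 = b j / sqrt (\<tau> j) / \<tau> j"
    by (simp add: power3_eq_cube)
qed simp

lemma weight_div_\<tau>_le_curvature: "j \<in> {1..m} \<Longrightarrow> \<beta> j / \<tau> j \<le> \<mu>"
  unfolding curvature_eq_sum_weights using weight_nonneg \<tau>_bounds(3)
  by (intro member_le_sum divide_nonneg_pos) auto

lemma weights_div_\<tau>_1_le_curvature: "(\<Sum>j=1..m. \<beta> j) / \<tau> 1 \<le> \<mu>"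
  unfolding curvature_eq_sum_weights sum_divide_distrib using weight_nonneg \<tau>_bounds
  by (intro sum_mono divide_left_mono) auto

lemma exists_large_weight:
  assumes "1 / 4 \<le> (\<Sum>j=1..m. \<beta> j)"
  shows "\<exists>j\<in>{1..m}. 1 / (4 * real m) \<le> \<beta> j"
proof (rule ccontr)
  assume "\<not> ?thesis"
  then have "(\<Sum>j=1..m. \<beta> j) < (\<Sum>j=1..m. 1 / (4 * real m))"
    using m_ge_1 by (intro sum_strict_mono) (auto simp: not_le)
  also have "\<dots> = 1 / 4"
    using m_ge_1 by simp
  finally show False
    using assms by simp
qed

abbreviation Q :: real where "Q \<equiv> \<tau> 1 powr (1/4)"

lemma Q_pos: "0 < Q"
  and Q_square: "Q * Q = sqrt (\<tau> 1)"
  and sqrt_16_sqrt_\<tau>_1: "sqrt (16 * sqrt (\<tau> 1)) = 4 * Q"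
proof -
  have "0 < \<tau> 1"
    using \<tau>_bounds(3)[of 1] m_ge_1 by simp
  then show "0 < Q" and Q_square: "Q * Q = sqrt (\<tau> 1)"
    by (simp_all add: powr_add[symmetric] powr_half_sqrt)
  then show "sqrt (16 * sqrt (\<tau> 1)) = 4 * Q"
    unfolding Q_square[symmetric] by (simp add: real_sqrt_mult)
qed

lemma consequences_of_large_\<tau>_m:
  assumes "16 * sqrt (\<tau> 1) < \<tau> m"
  shows "4 \<le> \<tau> m" and "1 \<le> Q" and "M \<le> a0 / (4 * Q)"
proof -
  have "sqrt (\<tau> m) \<le> sqrt (\<tau> 1)"
    using \<tau>_bounds(2)[of m] m_ge_1 by simp
  moreover have "sqrt (\<tau> m) * sqrt (\<tau> m) = \<tau> m"
    using \<tau>_m_pos by simp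
  ultimately have "16 * sqrt (\<tau> m) < sqrt (\<tau> m) * sqrt (\<tau> m)"
    using assms by linarith
  then have "16 < sqrt (\<tau> m)"
    by (rule mult_right_less_imp_less) (use \<tau>_m_pos in simp)
  then show "4 \<le> \<tau> m"
    using mult_mono[of 2 "sqrt (\<tau> m)" 2 "sqrt (\<tau> m)"] \<tau>_m_pos by simp
  show "1 \<le> Q"
  proof (rule ccontr)
    assume "\<not> 1 \<le> Q"
    then have "Q * Q \<le> 1"
      using Q_pos by (intro mult_le_one) auto
    then show False
      using Q_square \<open>16 < sqrt (\<tau> m)\<close> \<open>sqrt (\<tau> m) \<le> sqrt (\<tau> 1)\<close> by linarith
  qed
  have "4 * Q \<le> sqrt (\<tau> k)"
    using assms sqrt_16_sqrt_\<tau>_1 real_sqrt_le_mono[of "16 * sqrt (\<tau> 1)" "\<tau> m"]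
      real_sqrt_le_mono[OF \<tau>_bounds(1)[OF k_in]] by linarith
  then show "M \<le> a0 / (4 * Q)"
    unfolding M_def using a0_nonneg Q_pos \<tau>_bounds(3)[OF k_in] by (intro divide_left_mono mult_pos_pos) auto
qed

lemma integral_F_le_fourth_root_if_large_\<tau>_m:
  assumes "16 * sqrt (\<tau> 1) < \<tau> m"
  shows "norm (integral {0..R} F) \<le> 24 * a0 * Q"
proof (cases "(\<Sum>j=1..m. \<beta> j) < 1 / 4")
  case True
  then have "1 / 2 \<le> \<bar>g u\<bar>" if "u \<in> {0..R}" for u
    using slope_ge_half_if_small_weights that by fastforce
  then have "norm (integral {0..R} F) \<le> 6 * a0"
    by (rule integral_F_bound_if_slope_bounded_away[OF consequences_of_large_\<tau>_m(1)[OF assms]])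
  moreover have "24 * a0 * 1 \<le> 24 * a0 * Q"
    using consequences_of_large_\<tau>_m(2)[OF assms] a0_nonneg by (intro mult_left_mono) auto
  ultimately show ?thesis
    using a0_nonneg by linarith
next
  case False
  have "0 < \<tau> 1"
    using \<tau>_bounds(3)[of 1] m_ge_1 by simp
  with False have "(1 / 4) / \<tau> 1 \<le> (\<Sum>j=1..m. \<beta> j) / \<tau> 1"
    by (intro divide_right_mono) auto
  then have "1 / (4 * (sqrt (\<tau> 1))\<^sup>2) \<le> \<mu>"
    using weights_div_\<tau>_1_le_curvature \<open>0 < \<tau> 1\<close> by simp
  then have "norm (integral {0..R} F) \<le> 94 * M * (Q * Q)"
    using \<open>0 < \<tau> 1\<close> unfolding Q_square by (intro integral_F_le_if_curvature_ge) auto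
  also have "\<dots> \<le> 94 * (a0 / (4 * Q)) * (Q * Q)"
    using consequences_of_large_\<tau>_m(3)[OF assms] by (intro mult_right_mono mult_left_mono) auto
  also have "\<dots> \<le> 24 * a0 * Q"
    using Q_pos a0_nonneg by (simp add: field_simps)
  finally show ?thesis .
qed

lemma integral_F_le_fourth_root: "norm (integral {0..R} F) \<le> 24 * a0 * Q"
proof (cases "\<tau> m \<le> 16 * sqrt (\<tau> 1)")
  case True
  then have "sqrt (\<tau> m) \<le> 4 * Q"
    using sqrt_16_sqrt_\<tau>_1 real_sqrt_le_mono by metis
  have "norm (integral {0..R} F) \<le> a0 * sqrt (\<tau> m) / 8"
    by (rule integral_F_crude_bound)
  also have "\<dots> \<le> a0 * (4 * Q) / 8"
    using \<open>sqrt (\<tau> m) \<le> 4 * Q\<close> a0_nonneg by (intro divide_right_mono mult_left_mono) auto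
  also have "\<dots> \<le> 24 * a0 * Q"
    using a0_nonneg Q_pos by simp
  finally show ?thesis .
next
  case False
  then show ?thesis
    by (intro integral_F_le_fourth_root_if_large_\<tau>_m) simp
qed

definition b_ratio :: real where
  "b_ratio = real m powr (3/2) / b k * Max (b ` {1..m})"

lemma b_k_le_Max: "b k \<le> Max (b ` {1..m})"
  using k_in by (intro Max_ge) auto

lemma one_le_b_ratio: "1 \<le> b_ratio"
proof -
  have "1 \<le> real m powr (3/2)"
    using m_ge_1 by (intro ge_one_powr_ge_zero) auto
  moreover have "1 \<le> Max (b ` {1..m}) / b k"
    using b_k_le_Max b_pos[OF k_in] by simp
  ultimately have "1 * 1 \<le> real m powr (3/2) * (Max (b ` {1..m}) / b k)"
    by (intro mult_mono) auto
  then show ?thesis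
    unfolding b_ratio_def by simp
qed

lemma b_ratio_ge_if_large_weight:
  assumes j: "j \<in> {1..m}" and "1 / (4 * real m) \<le> \<beta> j" and "\<beta> k < 4"
  shows "sqrt (real m) * sqrt (\<tau> j) / (16 * sqrt (\<tau> k)) \<le> b_ratio"
proof -
  have m_pos: "0 < real m"
    using m_ge_1 by simp
  have "sqrt (\<tau> j) / (4 * real m) \<le> b j"
    using assms(2) \<tau>_bounds(3)[OF j] unfolding \<beta>_def by (simp add: field_simps)
  then have Max_ge: "sqrt (\<tau> j) / (4 * real m) \<le> Max (b ` {1..m})"
    using j by (meson Max_ge finite_atLeastAtMost finite_imageI imageI order.trans)
  have b_k_less: "b k < 4 * sqrt (\<tau> k)"
    using assms(3) \<tau>_bounds(3)[OF k_in] unfolding \<beta>_def by (simp add: field_simps)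
  have "real m powr (3/2) = real m powr 1 * real m powr (1/2)"
    by (subst powr_add[symmetric]) simp
  also have "\<dots> = real m * sqrt (real m)"
    using m_pos by (simp add: powr_half_sqrt)
  finally have "real m powr (3/2) = real m * sqrt (real m)" .
  then have "b_ratio = real m * sqrt (real m) * Max (b ` {1..m}) / b k"
    unfolding b_ratio_def by simp
  also have "\<dots> \<ge> real m * sqrt (real m) * (sqrt (\<tau> j) / (4 * real m)) / (4 * sqrt (\<tau> k))"
    using Max_ge b_k_less b_pos[OF k_in] b_k_le_Max m_pos \<tau>_bounds(3)[OF j]
    by (intro frac_le mult_left_mono mult_nonneg_nonneg) auto
  also have "real m * sqrt (real m) * (sqrt (\<tau> j) / (4 * real m)) / (4 * sqrt (\<tau> k))
      = sqrt (real m) * sqrt (\<tau> j) / (16 * sqrt (\<tau> k))"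
    using m_pos by simp
  finally show ?thesis .
qed

lemma integral_F_le_b_ratio_if_large_weight:
  assumes j: "j \<in> {1..m}" and \<beta>_j: "1 / (4 * real m) \<le> \<beta> j" and "\<beta> k < 4"
  shows "norm (integral {0..R} F) \<le> 1504 * a0 * b_ratio"
proof -
  define d where "d = sqrt (real m) * sqrt (\<tau> j)"
  have "0 < d" and d_sq: "d\<^sup>2 = real m * \<tau> j"
    unfolding d_def using m_ge_1 \<tau>_bounds(3)[OF j] by (simp_all add: power_mult_distrib)
  have "1 / (4 * d\<^sup>2) = (1 / (4 * real m)) / \<tau> j"
    unfolding d_sq by simp
  also have "\<dots> \<le> \<beta> j / \<tau> j"
    using \<beta>_j \<tau>_bounds(3)[OF j] by (intro divide_right_mono) auto
  also have "\<dots> \<le> \<mu>"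
    by (rule weight_div_\<tau>_le_curvature[OF j])
  finally have "norm (integral {0..R} F) \<le> 94 * M * d"
    by (rule integral_F_le_if_curvature_ge[OF \<open>0 < d\<close>])
  also have "\<dots> = 94 * 16 * a0 * (d / (16 * sqrt (\<tau> k)))"
    unfolding M_def by simp
  also have "\<dots> \<le> 94 * 16 * a0 * b_ratio"
    using b_ratio_ge_if_large_weight[OF j \<beta>_j \<open>\<beta> k < 4\<close>] a0_nonneg unfolding d_def
    by (intro mult_left_mono) auto
  finally show ?thesis
    by simp
qed

lemma integral_F_le_b_ratio: "norm (integral {0..R} F) \<le> 1504 * a0 * b_ratio"
proof -
  have a0_le: "c * a0 \<le> 1504 * a0 * b_ratio" if "c \<le> 1504" for c
    using that one_le_b_ratio a0_nonneg mult_left_mono[of 1 b_ratio "1504 * a0"] mult_right_mono[of c 1504 a0]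
    by linarith
  consider "\<tau> m < 4" | "4 \<le> \<tau> m" "(\<Sum>j=1..m. \<beta> j) < 1 / 4 \<or> 4 \<le> \<beta> k"
    | "1 / 4 \<le> (\<Sum>j=1..m. \<beta> j)" "\<beta> k < 4"
    by force
  then show ?thesis
  proof cases
    case 1
    then have "sqrt (\<tau> m) \<le> 2"
      using real_sqrt_le_mono[of "\<tau> m" 4] by simp
    then have "a0 * sqrt (\<tau> m) / 8 \<le> 1 / 4 * a0"
      using a0_nonneg mult_left_mono[of "sqrt (\<tau> m)" 2 a0] by simp
    then show ?thesis
      using integral_F_crude_bound a0_le[of "1 / 4"] by linarith
  next
    case 2
    then have "1 / 2 \<le> \<bar>g u\<bar>" if "u \<in> {0..R}" for u
      using slope_ge_half_if_small_weights[OF _ that] slope_le_neg_three_if_large_weight[OF _ that] by force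
    then have "norm (integral {0..R} F) \<le> 6 * a0"
      by (rule integral_F_bound_if_slope_bounded_away[OF \<open>4 \<le> \<tau> m\<close>])
    then show ?thesis
      using a0_le[of 6] by linarith
  next
    case 3
    then show ?thesis
      using exists_large_weight integral_F_le_b_ratio_if_large_weight by blast
  qed
qed

end

theorem corollary7p4:
  fixes chi :: "real \<Rightarrow> real" and a0 :: real
  assumes "smooth_fun chi" and "mono chi"
    and "\<forall>l. l \<le> 1/4 \<longrightarrow> chi l = 0"
    and "\<forall>l. l \<ge> 1/2 \<longrightarrow> chi l = 1"
  shows "\<exists>C0::real. \<forall>(m::nat) (\<tau>::nat \<Rightarrow> real) (b::nat \<Rightarrow> real) (\<omega>::real \<Rightarrow> real) (\<omega>'::real \<Rightarrow> real) (k::nat).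
    m \<ge> 1 \<longrightarrow>
    (\<forall>j\<in>{1..<m}. \<tau> (Suc j) \<le> \<tau> j) \<longrightarrow> \<tau> m > 0 \<longrightarrow>
    (\<forall>j\<in>{1..m}. b j > 0) \<longrightarrow>
    (\<forall>u>0. (\<omega> has_real_derivative \<omega>' u) (at u)) \<longrightarrow>
    (\<forall>u>0. \<bar>\<omega> u\<bar> \<le> a0) \<longrightarrow>
    (\<forall>u>0. \<bar>\<omega>' u\<bar> \<le> a0 / u) \<longrightarrow>
    k \<in> {1..m} \<longrightarrow>
    norm (integral {0<..} (\<lambda>u. exp (\<i> * complex_of_real (psi m \<tau> b u))
        * complex_of_real ((1 - chi (u / sqrt (\<tau> m))) * \<omega> u * (u / sqrt (\<tau> k)))))
      \<le> C0 * min (\<tau> 1 powr (1/4)) (real m powr (3/2) / b k * Max (b ` {1..m}))"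
proof (intro exI[of _ "1504 * a0"] allI impI)
  fix m :: nat and \<tau> b :: "nat \<Rightarrow> real" and \<omega> \<omega>' :: "real \<Rightarrow> real" and k :: nat
  assume "m \<ge> 1" "\<forall>j\<in>{1..<m}. \<tau> (Suc j) \<le> \<tau> j" "\<tau> m > 0" "\<forall>j\<in>{1..m}. b j > 0"
    "\<forall>u>0. (\<omega> has_real_derivative \<omega>' u) (at u)" "\<forall>u>0. \<bar>\<omega> u\<bar> \<le> a0"
    "\<forall>u>0. \<bar>\<omega>' u\<bar> \<le> a0 / u" "k \<in> {1..m}"
  then interpret cutoff_oscillatory_integral chi a0 m \<tau> b \<omega> \<omega>' k
    using assms by unfold_locales auto
  have "norm (integral {0..R} F) \<le> 24 * a0 * \<tau> 1 powr (1/4)"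
    by (rule integral_F_le_fourth_root)
  also have "\<dots> \<le> 1504 * a0 * \<tau> 1 powr (1/4)"
    using a0_nonneg by (intro mult_right_mono) auto
  finally have "norm (integral {0..R} F) \<le> min (1504 * a0 * \<tau> 1 powr (1/4)) (1504 * a0 * b_ratio)"
    using integral_F_le_b_ratio by simp
  then show "norm (integral {0<..} (\<lambda>u. exp (\<i> * complex_of_real (psi m \<tau> b u))
        * complex_of_real ((1 - chi (u / sqrt (\<tau> m))) * \<omega> u * (u / sqrt (\<tau> k)))))
      \<le> 1504 * a0 * min (\<tau> 1 powr (1/4)) (real m powr (3/2) / b k * Max (b ` {1..m}))"
    unfolding integral_eq_integral_F b_ratio_def[symmetric] using a0_nonneg by (simp add: min_mult_distrib_left)
qed

end
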